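(* Let $a<b$, $n\ge1$ an integer, $y\in C^1[a,b]$, and $x_k=a+\tfrac{k}{n}(b-a)$ for $0\le k\le n$. Then \[\sup_{x\in[a,b]}|y(x)|\le \max_{0\le k\le n-1}\Bigl\{\tfrac12\bigl|y(x_k)+y(x_{k+1})\bigr|+\tfrac12\sqrt{\tfrac{b-a}{n}}\Bigl(\int_{x_k}^{x_{k+1}}y'(t)^2\,dt\Bigr)^{1/2}\Bigr\}.\] *)

theory Defs
  imports "HOL-Analysis.Analysis"
begin

end

theory Submission
  imports Defs
begin

text \<open>
  On a cell \<open>[c, d]\<close> the fundamental theorem of calculus bounds \<open>|y x - y c|\<close> and
  \<open>|y d - y x|\<close> by the integrals of \<open>|y'|\<close> over \<open>[c, x]\<close> and \<open>[x, d]\<close>; writing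
  \<open>2 y x = (y c + y d) + (y x - y c) - (y d - y x)\<close> then gives
  \<open>|y x| \<le> |y c + y d| / 2 + (\<integral> |y'|) / 2\<close>, and the Cauchy-Schwarz inequality
  \<open>\<integral> |y'| \<le> \<surd>(d - c) \<surd>(\<integral> y'\<^sup>2)\<close> turns this into the cell's term of the maximum.
  Every point of \<open>[a, b]\<close> lies in some cell of the uniform partition.
\<close>

lemma integral_square_le_length_mult_integral_square:
  fixes c d :: real and f :: "real \<Rightarrow> real"
  assumes "c \<le> d" and f: "f integrable_on {c..d}" and f2: "(\<lambda>t. (f t)^2) integrable_on {c..d}"
  shows "(integral {c..d} f)^2 \<le> (d - c) * integral {c..d} (\<lambda>t. (f t)^2)"
proof (cases "c = d")
  case True
  then show ?thesis by simp
next
  case False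
  define J where "J = integral {c..d} f"
  define I where "I = integral {c..d} (\<lambda>t. (f t)^2)"
  define L where "L = d - c"
  define m where "m = J / L"
  have L_pos: "L > 0" using assms(1) False unfolding L_def by simp
  have expand: "(\<lambda>t. (f t - m)^2) = (\<lambda>t. (f t)^2 - 2 * m * f t + m^2)"
    by (auto simp: power2_eq_square algebra_simps)
  have lin: "(\<lambda>t. 2 * m * f t) integrable_on {c..d}"
    using integrable_cmul[OF f, of "2 * m"] by simp
  \<comment> \<open>\<open>m\<close> is the mean of \<open>f\<close>, and the variance \<open>\<integral> (f - m)\<^sup>2\<close> is nonnegative\<close>
  have "(\<lambda>t. (f t - m)^2) integrable_on {c..d}"
    unfolding expand by (intro integrable_add integrable_diff f2 lin integrable_const_ivl)
  then have "0 \<le> integral {c..d} (\<lambda>t. (f t - m)^2)"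
    by (rule integral_nonneg) simp
  also have "\<dots> = I - 2 * m * J + L * m^2"
  proof -
    have "((\<lambda>t. (f t)^2 - 2 * m * f t + m^2) has_integral I - 2 * m * J + L * m^2) {c..d}"
      using assms(1) unfolding I_def J_def L_def
      by (intro has_integral_add has_integral_diff has_integral_mult_right has_integral_const_real
          integrable_integral f f2) (use has_integral_const_real[of "m^2" c d] in simp)
    then show ?thesis
      unfolding expand by (rule integral_unique)
  qed
  also have "\<dots> = I - J^2 / L"
    using L_pos unfolding m_def by (simp add: field_simps power2_eq_square)
  finally show ?thesis
    using L_pos unfolding I_def J_def L_def by (simp add: field_simps)
qed

lemma uniform_partition_covers:
  fixes a b x :: real and n :: nat
  assumes "n \<ge> 1" and "x \<in> {a..b}"
  shows "\<exists>k<n. a + real k / real n * (b - a) \<le> x \<and> x \<le> a + real (k + 1) / real n * (b - a)"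
proof (cases "a = b")
  case True
  then show ?thesis using assms by (intro exI[of _ 0]) auto
next
  case False
  then have ab: "a < b" using assms(2) by simp
  define t where "t = real n * (x - a) / (b - a)"
  define k where "k = min (n - 1) (nat \<lfloor>t\<rfloor>)"
  have t: "0 \<le> t" "t \<le> real n"
    using assms ab unfolding t_def by (auto simp: field_simps intro: mult_left_mono)
  have k: "k < n" "real k \<le> t" "t \<le> real (k + 1)"
    using assms(1) t unfolding k_def by (auto simp: min_def of_nat_diff) linarith+
  have x: "x = a + t / real n * (b - a)"
    using assms(1) ab unfolding t_def by (simp add: field_simps)
  show ?thesis
    using k assms(1) ab
    by (intro exI[of _ k]) (auto simp: x divide_right_mono intro!: mult_right_mono)
qed

lemma integral_abs_le_sqrt_length_mult_sqrt_integral_square: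
  fixes c d :: real and f :: "real \<Rightarrow> real"
  assumes "c \<le> d" and "continuous_on {c..d} f"
  shows "integral {c..d} (\<lambda>t. \<bar>f t\<bar>) \<le> sqrt (d - c) * sqrt (integral {c..d} (\<lambda>t. (f t)^2))"
proof -
  have abs_int: "(\<lambda>t. \<bar>f t\<bar>) integrable_on {c..d}" and sq_int: "(\<lambda>t. \<bar>f t\<bar>^2) integrable_on {c..d}"
    by (intro integrable_continuous_interval continuous_intros assms)+
  have "(integral {c..d} (\<lambda>t. \<bar>f t\<bar>))^2 \<le> (d - c) * integral {c..d} (\<lambda>t. (f t)^2)"
    using integral_square_le_length_mult_integral_square[OF assms(1) abs_int sq_int] by simp
  moreover have "integral {c..d} (\<lambda>t. \<bar>f t\<bar>) \<ge> 0"
    by (rule integral_nonneg[OF abs_int]) simp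
  ultimately show ?thesis
    by (metis real_sqrt_le_mono real_sqrt_mult real_sqrt_unique)
qed

lemma abs_diff_le_integral_abs_deriv:
  fixes c d :: real and y y' :: "real \<Rightarrow> real"
  assumes "c \<le> d" and "continuous_on {c..d} y'"
    and "\<And>x. x \<in> {c..d} \<Longrightarrow> (y has_real_derivative y' x) (at x within {c..d})"
  shows "\<bar>y d - y c\<bar> \<le> integral {c..d} (\<lambda>t. \<bar>y' t\<bar>)"
proof -
  have "(y' has_integral (y d - y c)) {c..d}"
    using assms(1,3) by (intro fundamental_theorem_of_calculus)
      (auto simp: has_real_derivative_iff_has_vector_derivative[symmetric])
  moreover have "(\<lambda>t. \<bar>y' t\<bar>) integrable_on {c..d}"
    by (intro integrable_continuous_interval continuous_intros assms)
  ultimately show ?thesis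
    using integral_norm_bound_integral[of y' "{c..d}" "\<lambda>t. \<bar>y' t\<bar>"]
    by (simp add: integral_unique has_integral_integrable)
qed

lemma abs_le_half_abs_endpoint_sum_plus_half_integral_abs_deriv:
  fixes c d x :: real and y y' :: "real \<Rightarrow> real"
  assumes x: "x \<in> {c..d}" and y': "continuous_on {c..d} y'"
    and y: "\<And>x. x \<in> {c..d} \<Longrightarrow> (y has_real_derivative y' x) (at x within {c..d})"
  shows "\<bar>y x\<bar> \<le> (1/2) * \<bar>y c + y d\<bar> + (1/2) * integral {c..d} (\<lambda>t. \<bar>y' t\<bar>)"
proof -
  have "\<bar>y x - y c\<bar> \<le> integral {c..x} (\<lambda>t. \<bar>y' t\<bar>)" and "\<bar>y d - y x\<bar> \<le> integral {x..d} (\<lambda>t. \<bar>y' t\<bar>)"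
    using x by (auto intro!: abs_diff_le_integral_abs_deriv continuous_on_subset[OF y']
        has_field_derivative_subset[OF y])
  moreover have "integral {c..x} (\<lambda>t. \<bar>y' t\<bar>) + integral {x..d} (\<lambda>t. \<bar>y' t\<bar>)
      = integral {c..d} (\<lambda>t. \<bar>y' t\<bar>)"
    using x by (intro Henstock_Kurzweil_Integration.integral_combine
        integrable_continuous_interval continuous_intros y') auto
  moreover have "2 * \<bar>y x\<bar> \<le> \<bar>y c + y d\<bar> + \<bar>y x - y c\<bar> + \<bar>y d - y x\<bar>"
    by linarith
  ultimately show ?thesis
    by (simp add: field_simps)
qed

lemma abs_le_cell_bound:
  fixes c d x :: real and y y' :: "real \<Rightarrow> real"
  assumes "x \<in> {c..d}" and "continuous_on {c..d} y'"
    and "\<And>x. x \<in> {c..d} \<Longrightarrow> (y has_real_derivative y' x) (at x within {c..d})"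
  shows "\<bar>y x\<bar> \<le> (1/2) * \<bar>y c + y d\<bar>
           + (1/2) * sqrt (d - c) * sqrt (integral {c..d} (\<lambda>t. (y' t)^2))"
  using abs_le_half_abs_endpoint_sum_plus_half_integral_abs_deriv[OF assms]
    integral_abs_le_sqrt_length_mult_sqrt_integral_square[of c d y'] assms(1,2)
  by auto

theorem lemma9p2:
  fixes a b :: real and n :: nat and y y' :: "real \<Rightarrow> real"
  assumes "a < b" and "n \<ge> 1"
    and "continuous_on {a..b} y'"
    and "\<And>x. x \<in> {a..b} \<Longrightarrow> (y has_real_derivative y' x) (at x within {a..b})"
  defines "xk \<equiv> (\<lambda>k::nat. a + (real k / real n) * (b - a))"
  shows "(SUP x\<in>{a..b}. \<bar>y x\<bar>) \<le>
    (MAX k \<in> {0..n-1}. (1/2) * \<bar>y (xk k) + y (xk (k+1))\<bar>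
       + (1/2) * sqrt ((b - a) / real n) * sqrt (integral {xk k..xk (k+1)} (\<lambda>t. (y' t)^2)))"
    (is "_ \<le> Max (?F ` _)")
proof (rule cSUP_least)
  show "{a..b} \<noteq> {}" using assms(1) by simp
  fix x assume x: "x \<in> {a..b}"
  from uniform_partition_covers[OF assms(2) x] obtain k where k: "k < n" "x \<in> {xk k..xk (k+1)}"
    unfolding xk_def atLeastAtMost_iff by blast
  have "real (k+1) / real n \<le> 1"
    using k(1) by simp
  then have "xk (k+1) \<le> b"
    using assms(1) mult_left_le_one_le[of "b - a" "real (k+1) / real n"] unfolding xk_def
    by (simp del: of_nat_add)
  then have cell: "{xk k..xk (k+1)} \<subseteq> {a..b}"
    using assms(1) unfolding xk_def by auto
  have width: "xk (k+1) - xk k = (b - a) / real n"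
    using assms(2) unfolding xk_def by (simp add: field_simps)
  have "(y has_real_derivative y' t) (at t within {xk k..xk (k+1)})" if "t \<in> {xk k..xk (k+1)}" for t
    using that cell by (blast intro: has_field_derivative_subset[OF assms(4)])
  then have "\<bar>y x\<bar> \<le> ?F k"
    using abs_le_cell_bound[OF k(2) continuous_on_subset[OF assms(3) cell]] width by simp
  also have "?F k \<le> Max (?F ` {0..n-1})"
    using k(1) by (intro Max_ge) auto
  finally show "\<bar>y x\<bar> \<le> Max (?F ` {0..n-1})" .
qed

end
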